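(* Let $T$ be a finite tree and $G=T^2$ its square. Then $G$ is co-chordal (i.e. its complement $G^c$ is chordal) if and only if $T$ is one of: (i) the path $L_n$ with $2\le n\le 5$; (ii) a star graph; (iii) a (partially) whiskered star.
   Context: All graphs are finite and simple. For a graph $G$, the square $G^2$ is the graph on $V(G)$ whose edges are the pairs $\{x,y\}$ with $x\neq y$ and $\mathrm{dist}_G(x,y)\in\{1,2\}$. $G^c$ is the graph on $V(G)$ whose edges are the non-edges of $G$. A graph is chordal if it has no induced cycle of length $\ge4$. $L_n$ denotes the path on $n$ vertices. A star graph is $K_{1,t}$ ($t\ge1$). A (partially) whiskered star is the tree with vertex set $\{x_0,x_1,\dots,x_n,y_1,\dots,y_m\}$, where $n\ge1$ and $1\le m\le n$, and edge set $\{\{x_0,x_i\}:1\le i\le n\}\cup\{\{x_i,y_i\}:1\le i\le m\}$. *)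

theory Defs
  imports Main
begin

type_synonym 'a graph = "'a set \<times> 'a set set"

definition simple_graph :: "'a graph \<Rightarrow> bool" where
  "simple_graph G \<longleftrightarrow> finite (fst G) \<and>
     (\<forall>e\<in>snd G. \<exists>x y. x \<in> fst G \<and> y \<in> fst G \<and> x \<noteq> y \<and> e = {x, y})"

definition adj :: "'a graph \<Rightarrow> 'a \<Rightarrow> 'a \<Rightarrow> bool" where
  "adj G x y \<longleftrightarrow> {x, y} \<in> snd G"

definition connected_graph :: "'a graph \<Rightarrow> bool" where
  "connected_graph G \<longleftrightarrow>
     (\<forall>x\<in>fst G. \<forall>y\<in>fst G. (x, y) \<in> {(u, v). adj G u v}\<^sup>*)"

definition has_cycle :: "'a graph \<Rightarrow> bool" where
  "has_cycle G \<longleftrightarrow> (\<exists>vs. length vs \<ge> 3 \<and> distinct vs \<and> set vs \<subseteq> fst G \<and>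
     (\<forall>i < length vs. adj G (vs ! i) (vs ! ((i + 1) mod length vs))))"

definition is_tree :: "'a graph \<Rightarrow> bool" where
  "is_tree G \<longleftrightarrow> simple_graph G \<and> fst G \<noteq> {} \<and> connected_graph G \<and> \<not> has_cycle G"

definition graph_square :: "'a graph \<Rightarrow> 'a graph" where
  "graph_square G = (fst G, {{x, y} | x y. x \<in> fst G \<and> y \<in> fst G \<and> x \<noteq> y \<and>
      (adj G x y \<or> (\<exists>z \<in> fst G. adj G x z \<and> adj G z y))})"

definition graph_complement :: "'a graph \<Rightarrow> 'a graph" where
  "graph_complement G = (fst G, {{x, y} | x y. x \<in> fst G \<and> y \<in> fst G \<and> x \<noteq> y \<and>
      \<not> adj G x y})"

definition has_induced_cycle_ge4 :: "'a graph \<Rightarrow> bool" where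
  "has_induced_cycle_ge4 G \<longleftrightarrow> (\<exists>vs. length vs \<ge> 4 \<and> distinct vs \<and> set vs \<subseteq> fst G \<and>
     (\<forall>i < length vs. \<forall>j < length vs.
        adj G (vs ! i) (vs ! j) \<longleftrightarrow>
          (j = (i + 1) mod length vs \<or> i = (j + 1) mod length vs)))"

definition chordal :: "'a graph \<Rightarrow> bool" where
  "chordal G \<longleftrightarrow> \<not> has_induced_cycle_ge4 G"

definition graph_iso :: "'a graph \<Rightarrow> 'b graph \<Rightarrow> bool" where
  "graph_iso G H \<longleftrightarrow> (\<exists>f. bij_betw f (fst G) (fst H) \<and>
     (\<forall>x\<in>fst G. \<forall>y\<in>fst G. adj G x y \<longleftrightarrow> adj H (f x) (f y)))"

definition path_graph :: "nat \<Rightarrow> nat graph" where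
  "path_graph n = ({0..<n}, {{i, i + 1} | i. i + 1 < n})"

definition star_graph :: "nat \<Rightarrow> nat graph" where
  "star_graph t = ({0..t}, {{0, i} | i. 1 \<le> i \<and> i \<le> t})"

text \<open>Partially whiskered star: x_i = (i,0) for 0 \<le> i \<le> n, y_i = (i,1) for 1 \<le> i \<le> m.\<close>
definition whiskered_star :: "nat \<Rightarrow> nat \<Rightarrow> (nat \<times> nat) graph" where
  "whiskered_star n m =
    ({(i, 0) | i. i \<le> n} \<union> {(i, 1) | i. 1 \<le> i \<and> i \<le> m},
     {{(0, 0), (i, 0)} | i. 1 \<le> i \<and> i \<le> n} \<union> {{(i, 0), (i, 1)} | i. 1 \<le> i \<and> i \<le> m})"

end

theory Submission
  imports Defs
begin

(*
  In T^2 two vertices are non-adjacent exactly when their distance in T is at least 3, so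
  the complement of T^2 joins the "far" pairs.  In a tree a non-backtracking walk is a path,
  hence the ends of a non-backtracking walk with at least three edges are far.  This gives an
  induced 4-cycle in the complement of T^2 whenever T contains the path L_6, two adjacent
  vertices with two further neighbours each, or a vertex with two pendant neighbours and a
  further leg of length 3.  A tree avoiding these three configurations has a centre c such
  that every neighbour of c has at most one further neighbour and that one is a leaf: T is a
  star or a partially whiskered star (L_2, ..., L_5 are among these).  Conversely, for such a
  centre the vertices at distance 2 from c are pairwise far while c and its neighbours are
  pairwise close, so the complement of T^2 is a split graph and therefore chordal.
*)

section \<open>Squares, complements and split graphs\<close>

lemma adj_sym: "adj G x y \<longleftrightarrow> adj G y x"
  by (simp add: adj_def insert_commute)

lemma fst_graph_square [simp]: "fst (graph_square G) = fst G"
  by (simp add: graph_square_def)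

lemma fst_graph_complement [simp]: "fst (graph_complement G) = fst G"
  by (simp add: graph_complement_def)

lemma adj_graph_square:
  "adj (graph_square G) x y \<longleftrightarrow> x \<in> fst G \<and> y \<in> fst G \<and> x \<noteq> y \<and>
     (adj G x y \<or> (\<exists>z\<in>fst G. adj G x z \<and> adj G z y))"
  unfolding graph_square_def adj_def[of "(_, _)"]
  by (auto simp: doubleton_eq_iff) (metis adj_sym)+

lemma adj_graph_complement:
  "adj (graph_complement G) x y \<longleftrightarrow> x \<in> fst G \<and> y \<in> fst G \<and> x \<noteq> y \<and> \<not> adj G x y"
  unfolding graph_complement_def adj_def[of "(_, _)"]
  by (auto simp: doubleton_eq_iff adj_sym)

lemma simple_graph_adjD:
  assumes "simple_graph G" "adj G x y"
  shows "x \<in> fst G \<and> y \<in> fst G \<and> x \<noteq> y"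
  using assms unfolding simple_graph_def adj_def by (fastforce simp: doubleton_eq_iff)

lemma graph_iso_trans:
  assumes "graph_iso G H" and "graph_iso H K"
  shows "graph_iso G K"
proof -
  obtain f where f: "bij_betw f (fst G) (fst H)"
    and f_adj: "\<forall>x\<in>fst G. \<forall>y\<in>fst G. adj G x y \<longleftrightarrow> adj H (f x) (f y)"
    using assms(1) unfolding graph_iso_def by blast
  obtain g where g: "bij_betw g (fst H) (fst K)"
    and g_adj: "\<forall>x\<in>fst H. \<forall>y\<in>fst H. adj H x y \<longleftrightarrow> adj K (g x) (g y)"
    using assms(2) unfolding graph_iso_def by blast
  have "bij_betw (g \<circ> f) (fst G) (fst K)"
    using f g by (rule bij_betw_trans)
  moreover have "\<forall>x\<in>fst G. \<forall>y\<in>fst G. adj G x y \<longleftrightarrow> adj K ((g \<circ> f) x) ((g \<circ> f) y)"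
    using f_adj g_adj bij_betw_apply[OF f] by simp
  ultimately show ?thesis
    unfolding graph_iso_def by blast
qed

lemma split_graph_chordal:
  assumes vertices: "fst G \<subseteq> K \<union> I"
    and clique: "\<And>x y. x \<in> K \<Longrightarrow> y \<in> K \<Longrightarrow> x \<noteq> y \<Longrightarrow> adj G x y"
    and independent: "\<And>x y. x \<in> I \<Longrightarrow> y \<in> I \<Longrightarrow> \<not> adj G x y"
  shows "chordal G"
  unfolding chordal_def has_induced_cycle_ge4_def
proof (intro notI, elim exE conjE)
  fix vs :: "'a list"
  define n where "n = length vs"
  assume "length vs \<ge> 4" "distinct vs" "set vs \<subseteq> fst G"
    and cycle: "\<forall>i<length vs. \<forall>j<length vs.
      adj G (vs ! i) (vs ! j) \<longleftrightarrow> j = (i + 1) mod length vs \<or> i = (j + 1) mod length vs"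
  then have n: "n \<ge> 4" and in_KI: "\<And>i. i < n \<Longrightarrow> vs ! i \<in> K \<union> I"
    and inj: "\<And>i j. i < n \<Longrightarrow> j < n \<Longrightarrow> vs ! i = vs ! j \<Longrightarrow> i = j"
    using vertices nth_mem nth_eq_iff_index_eq unfolding n_def by blast+
  have middle_in_K: "vs ! j \<in> K"
    if "i < n" "j < n" "k < n" "i \<noteq> k" "adj G (vs ! i) (vs ! j)" "adj G (vs ! j) (vs ! k)"
      "\<not> adj G (vs ! i) (vs ! k)" for i j k
    using that in_KI[of i] in_KI[of j] in_KI[of k] inj[of i k] clique independent adj_sym
    by blast
  have cycle_adj_iff: "adj G (vs ! i) (vs ! j) \<longleftrightarrow> j = Suc i mod n \<or> i = Suc j mod n"
    if "i < n" "j < n" for i j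
    using cycle that by (simp add: n_def)
  have "vs ! 0 \<in> K"
    by (rule middle_in_K[of "n - 1" 0 1]) (use n in \<open>auto simp: cycle_adj_iff\<close>)
  moreover have "vs ! 2 \<in> K"
    by (rule middle_in_K[of 1 2 3]) (use n in \<open>auto simp: cycle_adj_iff le_less mod_Suc\<close>)
  moreover have "\<not> adj G (vs ! 0) (vs ! 2)"
    using n by (simp add: cycle_adj_iff)
  ultimately show False
    using clique inj[of 0 2] n by fastforce
qed

lemma induced_4_cycle_not_chordal:
  assumes "{a, b, c, d} \<subseteq> fst G" and irrefl: "\<And>x. \<not> adj G x x"
    and "adj G a b" "adj G b c" "adj G c d" "adj G d a"
    and "\<not> adj G a c" "\<not> adj G b d" "a \<noteq> c" "b \<noteq> d"
  shows "\<not> chordal G"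
proof -
  have all_less_4: "(\<forall>i<4. P i) \<longleftrightarrow> P (0::nat) \<and> P 1 \<and> P 2 \<and> P 3" for P
    by (auto simp: less_Suc_eq numeral_eq_Suc)
  define vs where "vs = [a, b, c, d]"
  have "length vs = 4" "distinct vs" "set vs \<subseteq> fst G"
    using assms by (auto simp: vs_def)
  moreover have "\<forall>i<4. \<forall>j<4. adj G (vs ! i) (vs ! j) \<longleftrightarrow> j = (i + 1) mod 4 \<or> i = (j + 1) mod 4"
    unfolding all_less_4 vs_def using assms adj_sym[of G] by simp
  ultimately show ?thesis
    unfolding chordal_def has_induced_cycle_ge4_def by (metis order_refl)
qed

lemma ex_bij_betw_interval_prefix:
  assumes "finite A" "B \<subseteq> A"
  shows "\<exists>g. bij_betw g A {1..card A} \<and> g ` B = {1..card B}"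
proof -
  have "finite B"
    using assms finite_subset by blast
  then obtain g1 where g1: "bij_betw g1 B {1..card B}"
    using finite_same_card_bij[of B "{1..card B}"] by auto
  have "card (A - B) = card {card B<..card A}"
    using assms card_Diff_subset[of B A] \<open>finite B\<close> by simp
  then obtain g0 where g0: "bij_betw g0 (A - B) {card B<..card A}"
    using finite_same_card_bij[of "A - B" "{card B<..card A}"] assms by auto
  define g where "g x = (if x \<in> B then g1 x else g0 x)" for x
  have "bij_betw g B {1..card B}"
    using g1 bij_betw_cong[of B g g1] by (simp add: g_def)
  moreover have "bij_betw g (A - B) {card B<..card A}"
    using g0 bij_betw_cong[of "A - B" g g0] by (simp add: g_def)
  ultimately have "bij_betw g (B \<union> (A - B)) ({1..card B} \<union> {card B<..card A})"
    by (rule bij_betw_combine) auto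
  moreover have "B \<union> (A - B) = A" "{1..card B} \<union> {card B<..card A} = {1..card A}"
    using assms card_mono[of A B] by auto
  moreover have "g ` B = {1..card B}"
    using g1 by (simp add: g_def bij_betw_def)
  ultimately show ?thesis
    by metis
qed

section \<open>Stars, whiskered stars and spider centres\<close>

lemma fst_path_graph: "fst (path_graph n) = {0..<n}"
  by (simp add: path_graph_def)

lemma fst_star_graph: "fst (star_graph t) = {0..t}"
  by (simp add: star_graph_def)

lemma fst_whiskered_star:
  "fst (whiskered_star n m) = {(i, 0) | i. i \<le> n} \<union> {(i, 1) | i. 1 \<le> i \<and> i \<le> m}"
  by (simp add: whiskered_star_def)

lemma adj_whiskered_star:
  "adj (whiskered_star n m) p q \<longleftrightarrow>
     (p = (0, 0) \<and> (\<exists>i. q = (i, 0) \<and> 1 \<le> i \<and> i \<le> n)) \<or>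
     (q = (0, 0) \<and> (\<exists>i. p = (i, 0) \<and> 1 \<le> i \<and> i \<le> n)) \<or>
     (\<exists>i. 1 \<le> i \<and> i \<le> m \<and> (p = (i, 0) \<and> q = (i, 1) \<or> p = (i, 1) \<and> q = (i, 0)))"
  by (auto simp: adj_def whiskered_star_def doubleton_eq_iff)

lemma adj_star_graph:
  "adj (star_graph t) x y \<longleftrightarrow> (x = 0 \<and> 1 \<le> y \<and> y \<le> t) \<or> (y = 0 \<and> 1 \<le> x \<and> x \<le> t)"
  by (auto simp: adj_def star_graph_def doubleton_eq_iff)

lemma adj_path_graph: "adj (path_graph n) x y \<longleftrightarrow> (y = Suc x \<and> y < n) \<or> (x = Suc y \<and> x < n)"
  by (auto simp: adj_def path_graph_def doubleton_eq_iff)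

lemma graph_iso_whiskered_star_0: "graph_iso (whiskered_star n 0) (star_graph n)"
proof -
  have "bij_betw fst (fst (whiskered_star n 0)) (fst (star_graph n))"
    by (auto simp: bij_betw_def inj_on_def fst_whiskered_star fst_star_graph image_iff)
  moreover have "adj (whiskered_star n 0) p q \<longleftrightarrow> adj (star_graph n) (fst p) (fst q)"
    if "p \<in> fst (whiskered_star n 0)" "q \<in> fst (whiskered_star n 0)" for p q
    using that by (auto simp: adj_whiskered_star adj_star_graph fst_whiskered_star)
  ultimately show ?thesis
    unfolding graph_iso_def by blast
qed

(* In a tree: c is the centre of a star or of a partially whiskered star. *)
definition spider_centre :: "'a graph \<Rightarrow> 'a \<Rightarrow> bool" where
  "spider_centre G c \<longleftrightarrow> c \<in> fst G \<and>
     (\<forall>u w w'. adj G c u \<and> adj G u w \<and> adj G u w' \<and> w \<noteq> c \<and> w' \<noteq> c \<longrightarrow> w = w') \<and>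
     (\<forall>u w x. adj G c u \<and> adj G u w \<and> adj G w x \<and> w \<noteq> c \<longrightarrow> x = u)"

lemma spider_centreI:
  assumes "c \<in> fst G"
    and "\<And>u w w'. adj G c u \<Longrightarrow> adj G u w \<Longrightarrow> adj G u w' \<Longrightarrow> w \<noteq> c \<Longrightarrow> w' \<noteq> c \<Longrightarrow> w = w'"
    and "\<And>u w x. adj G c u \<Longrightarrow> adj G u w \<Longrightarrow> adj G w x \<Longrightarrow> w \<noteq> c \<Longrightarrow> x = u"
  shows "spider_centre G c"
  using assms unfolding spider_centre_def by blast

lemma spider_centre_graph_iso:
  assumes "simple_graph G" "graph_iso G H" "spider_centre H c'"
  shows "\<exists>c. spider_centre G c"
proof -
  obtain f where f: "bij_betw f (fst G) (fst H)"
    and f_adj: "\<And>x y. x \<in> fst G \<Longrightarrow> y \<in> fst G \<Longrightarrow> adj G x y \<longleftrightarrow> adj H (f x) (f y)"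
    using assms(2) unfolding graph_iso_def by blast
  note adj_vertices = simple_graph_adjD[OF assms(1)]
  define c where "c = inv_into (fst G) f c'"
  have c: "c \<in> fst G" "f c = c'"
    using assms(3) f unfolding c_def spider_centre_def
    by (auto simp: bij_betw_def inv_into_into f_inv_into_f)
  have f_eq_iff: "x \<in> fst G \<Longrightarrow> y \<in> fst G \<Longrightarrow> f x = f y \<longleftrightarrow> x = y" for x y
    using f by (auto simp: bij_betw_def inj_on_def)
  have "spider_centre G c"
  proof (rule spider_centreI)
    show "w = w'" if "adj G c u" "adj G u w" "adj G u w'" "w \<noteq> c" "w' \<noteq> c" for u w w'
      using that assms(3) c adj_vertices f_adj f_eq_iff unfolding spider_centre_def by metis
    show "x = u" if "adj G c u" "adj G u w" "adj G w x" "w \<noteq> c" for u w x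
      using that assms(3) c adj_vertices f_adj f_eq_iff unfolding spider_centre_def by metis
  qed (rule c)
  then show ?thesis ..
qed

lemma spider_centre_path_graph:
  assumes "0 < n" "n \<le> 5"
  shows "spider_centre (path_graph n) ((n - 1) div 2)"
proof -
  have "n \<in> {1, 2, 3, 4, 5}"
    using assms by auto
  then show ?thesis
    by (auto simp: spider_centre_def adj_path_graph fst_path_graph)
qed

lemma spider_centre_star_graph: "spider_centre (star_graph t) 0"
  by (auto simp: spider_centre_def adj_star_graph fst_star_graph)

lemma spider_centre_whiskered_star: "spider_centre (whiskered_star n m) (0, 0)"
  by (auto simp: spider_centre_def adj_whiskered_star fst_whiskered_star)

section \<open>Forbidden subtrees\<close>

fun non_backtracking :: "'a list \<Rightarrow> bool" where
  "non_backtracking (x # y # z # zs) \<longleftrightarrow> x \<noteq> z \<and> non_backtracking (y # z # zs)"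
| "non_backtracking _ \<longleftrightarrow> True"

lemma non_backtracking_tl: "non_backtracking (x # xs) \<Longrightarrow> non_backtracking xs"
  by (cases xs rule: non_backtracking.cases) auto

locale tree =
  fixes T :: "'a graph"
  assumes is_tree: "is_tree T"
begin

abbreviation far :: "'a \<Rightarrow> 'a \<Rightarrow> bool" where
  "far \<equiv> adj (graph_complement (graph_square T))"

lemma simple_graph: "simple_graph T"
  using is_tree by (simp add: is_tree_def)

lemma finite_vertices: "finite (fst T)"
  using simple_graph by (simp add: simple_graph_def)

lemma adj_vertices: "adj T x y \<Longrightarrow> x \<in> fst T \<and> y \<in> fst T \<and> x \<noteq> y"
  using simple_graph by (rule simple_graph_adjD)

lemma far_iff:
  "far x y \<longleftrightarrow> x \<in> fst T \<and> y \<in> fst T \<and> x \<noteq> y \<and> \<not> adj T x y \<and> \<not> (\<exists>z. adj T x z \<and> adj T z y)"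
  by (auto simp: adj_graph_complement adj_graph_square dest: adj_vertices)

lemma walk_vertices: "successively (adj T) (x # y # xs) \<Longrightarrow> set (x # y # xs) \<subseteq> fst T"
  by (induction xs arbitrary: x y) (auto dest: adj_vertices)

lemma no_closed_path:
  assumes "distinct vs" "length vs \<ge> 3" "successively (adj T) vs" "adj T (last vs) (hd vs)"
  shows False
proof -
  have vs_ne: "vs \<noteq> []"
    using assms(2) by auto
  have closing: "adj T (vs ! i) (vs ! ((i + 1) mod length vs))" if "i < length vs" for i
  proof (cases "Suc i < length vs")
    case True
    then show ?thesis
      using assms(3) by (simp add: successively_nth)
  next
    case False
    then have "i = length vs - 1"
      using that by simp
    then show ?thesis
      using assms(4) vs_ne by (simp add: last_conv_nth hd_conv_nth)
  qed
  moreover have "set vs \<subseteq> fst T"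
    using assms(2,3) walk_vertices by (cases vs rule: non_backtracking.cases) (auto simp del: set_simps)
  ultimately have "has_cycle T"
    unfolding has_cycle_def using assms(1,2) by blast
  then show False
    using is_tree by (simp add: is_tree_def)
qed

lemma no_triangle: "adj T x y \<Longrightarrow> adj T y z \<Longrightarrow> adj T z x \<Longrightarrow> False"
  using no_closed_path[of "[x, y, z]"] adj_vertices by auto

lemma non_backtracking_walk_distinct:
  "successively (adj T) xs \<Longrightarrow> non_backtracking xs \<Longrightarrow> distinct xs"
proof (induction xs)
  case Nil
  then show ?case by simp
next
  case (Cons x xs)
  have "distinct xs"
    using Cons.IH Cons.prems(1) non_backtracking_tl[OF Cons.prems(2)]
    by (auto simp: successively_Cons)
  moreover have "x \<notin> set xs"
  proof
    assume "x \<in> set xs"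
    then obtain k where k: "k < length xs" "xs ! k = x"
      by (auto simp: in_set_conv_nth)
    have "k \<noteq> 0"
    proof
      assume "k = 0"
      then have "adj T x x"
        using Cons.prems(1) k by (cases xs) auto
      then show False
        using adj_vertices by blast
    qed
    moreover have "k \<noteq> 1"
      using Cons.prems(2) k by (cases xs rule: non_backtracking.cases) auto
    ultimately have "k \<ge> 2"
      by simp
    let ?cycle = "x # take k xs"
    have "successively (adj T) (take (Suc k) (x # xs))"
      using Cons.prems(1) successively_append_iff[of _ "take (Suc k) (x # xs)"]
      by (metis append_take_drop_id)
    moreover have "distinct ?cycle"
      using \<open>distinct xs\<close> k by (auto simp: in_set_conv_nth nth_eq_iff_index_eq)
    moreover have "last ?cycle = xs ! (k - 1)"
      using k \<open>k \<ge> 2\<close> by (auto simp: last_conv_nth)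
    moreover have "adj T (xs ! (k - 1)) (xs ! k)"
      using Cons.prems(1) k \<open>k \<ge> 2\<close> successively_nth[of "adj T" xs "k - 1"]
      by (auto simp: successively_Cons)
    ultimately show False
      using no_closed_path[of ?cycle] k \<open>k \<ge> 2\<close> by auto
  qed
  ultimately show ?case
    by simp
qed

lemma non_backtracking_walk_ends_far:
  assumes walk: "successively (adj T) xs" and nb: "non_backtracking xs" and len: "length xs \<ge> 4"
  shows "far (hd xs) (last xs)"
proof -
  obtain a b rest where xs: "xs = a # b # rest" and rest: "length rest \<ge> 2"
    using len by (cases xs rule: non_backtracking.cases) auto
  have distinct: "distinct xs"
    using walk nb by (rule non_backtracking_walk_distinct)
  have last: "last xs = last rest" "last (b # rest) = last rest" "last rest \<in> set rest"
    using rest by (auto simp: xs intro!: last_in_set)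
  have "hd xs \<noteq> last xs"
    using distinct last by (auto simp: xs)
  moreover have "\<not> adj T (hd xs) (last xs)"
    using no_closed_path[OF distinct _ walk] len adj_sym by fastforce
  moreover have "\<not> adj T (hd xs) z \<or> \<not> adj T z (last xs)" for z
  proof (cases "z = b")
    case True
    then show ?thesis
      using no_closed_path[of "b # rest"] distinct walk rest last adj_sym[of T b "last rest"]
      by (auto simp: xs)
  next
    case False
    have "successively (adj T) (z # xs) \<Longrightarrow> non_backtracking (z # xs)"
      using nb False rest by (cases rest) (auto simp: xs)
    then show ?thesis
      using no_closed_path[of "z # xs"] non_backtracking_walk_distinct[of "z # xs"] walk last
        adj_sym[of T a z] adj_sym[of T z "last rest"]
      by (auto simp: xs)
  qed
  moreover have "hd xs \<in> fst T" "last xs \<in> fst T"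
    using walk_vertices walk last by (auto simp: xs)
  ultimately show ?thesis
    by (auto simp: far_iff)
qed

lemma far_4_cycle_not_chordal:
  assumes "far a b" "far b c" "far c d" "far d a" "\<not> far a c" "\<not> far b d" "a \<noteq> c" "b \<noteq> d"
  shows "\<not> chordal (graph_complement (graph_square T))"
  by (rule induced_4_cycle_not_chordal[OF _ _ assms]) (use assms(1,3) in \<open>auto simp: far_iff\<close>)

lemma double_star_not_chordal:
  assumes "adj T u v" "adj T u a" "adj T u b" "adj T v d" "adj T v e"
    and "a \<noteq> b" "d \<noteq> e" "a \<noteq> v" "b \<noteq> v" "d \<noteq> u" "e \<noteq> u"
  shows "\<not> chordal (graph_complement (graph_square T))"
proof (rule far_4_cycle_not_chordal)
  show "far a d" "far d b" "far b e" "far e a"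
    using non_backtracking_walk_ends_far[of "[a, u, v, d]"] non_backtracking_walk_ends_far[of "[d, v, u, b]"]
      non_backtracking_walk_ends_far[of "[b, u, v, e]"] non_backtracking_walk_ends_far[of "[e, v, u, a]"] assms adj_sym[of T]
    by simp_all
  show "\<not> far a b" "\<not> far d e"
    using assms adj_sym[of T] by (auto simp: far_iff)
qed (use assms in auto)

lemma spider_1_1_3_not_chordal:
  assumes "adj T u a" "adj T u b" "adj T u d" "adj T d e" "adj T e f"
    and "a \<noteq> b" "a \<noteq> d" "b \<noteq> d" "e \<noteq> u" "f \<noteq> d"
  shows "\<not> chordal (graph_complement (graph_square T))"
proof (rule far_4_cycle_not_chordal)
  show "far a e" "far e b" "far b f" "far f a"
    using non_backtracking_walk_ends_far[of "[a, u, d, e]"] non_backtracking_walk_ends_far[of "[e, d, u, b]"]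
      non_backtracking_walk_ends_far[of "[b, u, d, e, f]"] non_backtracking_walk_ends_far[of "[f, e, d, u, a]"] assms adj_sym[of T]
    by simp_all
  show "\<not> far a b" "\<not> far e f"
    using assms adj_sym[of T] by (auto simp: far_iff)
  show "e \<noteq> f"
    using assms adj_vertices by blast
qed (use assms in auto)

lemma path_6_not_chordal:
  assumes "adj T v0 v1" "adj T v1 v2" "adj T v2 v3" "adj T v3 v4" "adj T v4 v5"
    and "v0 \<noteq> v2" "v1 \<noteq> v3" "v2 \<noteq> v4" "v3 \<noteq> v5"
  shows "\<not> chordal (graph_complement (graph_square T))"
proof (rule far_4_cycle_not_chordal)
  show "far v0 v4" "far v4 v1" "far v1 v5" "far v5 v0"
    using non_backtracking_walk_ends_far[of "[v0, v1, v2, v3, v4]"] non_backtracking_walk_ends_far[of "[v4, v3, v2, v1]"]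
      non_backtracking_walk_ends_far[of "[v1, v2, v3, v4, v5]"] non_backtracking_walk_ends_far[of "[v5, v4, v3, v2, v1, v0]"] assms adj_sym[of T]
    by simp_all
  show "\<not> far v0 v1" "\<not> far v4 v5"
    using assms by (auto simp: far_iff)
  show "v0 \<noteq> v1" "v4 \<noteq> v5"
    using assms adj_vertices by blast+
qed

lemma spider_centre_if_degree_3:
  assumes chordal: "chordal (graph_complement (graph_square T))"
    and "adj T c a" "adj T c b" "adj T c d" "a \<noteq> b" "a \<noteq> d" "b \<noteq> d"
  shows "spider_centre T c"
proof (rule spider_centreI)
  have two_others: "\<exists>p q. adj T c p \<and> adj T c q \<and> p \<noteq> q \<and> p \<noteq> u \<and> q \<noteq> u" for u
    using assms by metis
  show "c \<in> fst T"
    using assms adj_vertices by blast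
  show "w = w'" if "adj T c u" "adj T u w" "adj T u w'" "w \<noteq> c" "w' \<noteq> c" for u w w'
  proof (rule ccontr)
    assume "w \<noteq> w'"
    moreover obtain p q where "adj T c p" "adj T c q" "p \<noteq> q" "p \<noteq> u" "q \<noteq> u"
      using two_others by blast
    ultimately show False
      using double_star_not_chordal[of c u p q w w'] that chordal by blast
  qed
  show "x = u" if "adj T c u" "adj T u w" "adj T w x" "w \<noteq> c" for u w x
  proof (rule ccontr)
    assume "x \<noteq> u"
    moreover obtain p q where "adj T c p" "adj T c q" "p \<noteq> q" "p \<noteq> u" "q \<noteq> u"
      using two_others by blast
    ultimately show False
      using spider_1_1_3_not_chordal[of c p q u w x] that chordal by blast
  qed
qed

lemma max_degree_2_path_spider_centre:
  assumes chordal: "chordal (graph_complement (graph_square T))"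
    and degree_2: "\<And>v a b d. adj T v a \<Longrightarrow> adj T v b \<Longrightarrow> adj T v d \<Longrightarrow> a = b \<or> a = d \<or> b = d"
    and path: "adj T x u" "adj T u w" "adj T w z" "w \<noteq> x" "z \<noteq> u"
  shows "spider_centre T u \<or> spider_centre T w"
proof -
  have u_nbrs: "adj T u y \<Longrightarrow> y = x \<or> y = w" for y
    using degree_2[of u x w y] path adj_sym[of T] by blast
  have w_nbrs: "adj T w y \<Longrightarrow> y = u \<or> y = z" for y
    using degree_2[of w u z y] path adj_sym[of T] by blast
  show ?thesis
  proof (cases "\<exists>r. adj T z r \<and> r \<noteq> w")
    case True
    then obtain r where r: "adj T z r" "r \<noteq> w"
      by blast
    have z_nbrs: "adj T z y \<Longrightarrow> y = w \<or> y = r" for y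
      using degree_2[of z w r y] path r adj_sym[of T] by blast
    have x_leaf: "adj T x y \<Longrightarrow> y = u" for y
      using path_6_not_chordal[of y x u w z r] path r chordal adj_sym[of T] by blast
    have r_leaf: "adj T r y \<Longrightarrow> y = z" for y
      using path_6_not_chordal[of x u w z r y] path r chordal by blast
    have "spider_centre T w"
      by (rule spider_centreI)
        (use path adj_vertices u_nbrs w_nbrs z_nbrs x_leaf r_leaf in metis)+
    then show ?thesis ..
  next
    case False
    then have z_leaf: "adj T z y \<Longrightarrow> y = w" for y
      by blast
    have x_whiskers: "adj T x q \<Longrightarrow> q \<noteq> u \<Longrightarrow> adj T q y \<Longrightarrow> y = x" for q y
      using path_6_not_chordal[of y q x u w z] path chordal adj_sym[of T] by blast
    have "spider_centre T u"
      by (rule spider_centreI)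
        (use path adj_vertices u_nbrs w_nbrs z_leaf x_whiskers degree_2 adj_sym[of T] in metis)+
    then show ?thesis ..
  qed
qed

lemma ex_spider_centre_if_max_degree_2:
  assumes chordal: "chordal (graph_complement (graph_square T))"
    and degree_2: "\<And>v a b d. adj T v a \<Longrightarrow> adj T v b \<Longrightarrow> adj T v d \<Longrightarrow> a = b \<or> a = d \<or> b = d"
  shows "\<exists>c. spider_centre T c"
proof -
  obtain x where x: "x \<in> fst T"
    using is_tree unfolding is_tree_def by blast
  show ?thesis
  proof (cases "spider_centre T x")
    case False
    then obtain u w where xuw: "adj T x u" "adj T u w" "w \<noteq> x"
      and "(\<exists>w'. adj T u w' \<and> w' \<noteq> x \<and> w' \<noteq> w) \<or> (\<exists>z. adj T w z \<and> z \<noteq> u)"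
      using x unfolding spider_centre_def by blast
    moreover have "\<not> (adj T u w' \<and> w' \<noteq> x \<and> w' \<noteq> w)" for w'
      using degree_2[of u x w w'] xuw adj_sym[of T] by blast
    ultimately obtain z where z: "adj T w z" "z \<noteq> u"
      by blast
    have "spider_centre T u \<or> spider_centre T w"
      by (rule max_degree_2_path_spider_centre) (use chordal degree_2 xuw z in auto)
    then show ?thesis
      by blast
  qed blast
qed

lemma chordal_imp_ex_spider_centre:
  assumes "chordal (graph_complement (graph_square T))"
  shows "\<exists>c. spider_centre T c"
proof (cases "\<exists>c a b d. adj T c a \<and> adj T c b \<and> adj T c d \<and> a \<noteq> b \<and> a \<noteq> d \<and> b \<noteq> d")
  case True
  then show ?thesis
    using spider_centre_if_degree_3[OF assms] by blast
next
  case False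
  then show ?thesis
    using ex_spider_centre_if_max_degree_2[OF assms] by blast
qed

end

section \<open>Trees with a spider centre\<close>

locale spider = tree T for T :: "'a graph" +
  fixes c :: 'a
  assumes centre: "spider_centre T c"
begin

definition centre_nbrs :: "'a set" where
  "centre_nbrs = {u. adj T c u}"

definition tips :: "'a set" where
  "tips = {w. w \<noteq> c \<and> (\<exists>u. adj T c u \<and> adj T u w)}"

definition parent :: "'a \<Rightarrow> 'a" where
  "parent w = (SOME u. adj T c u \<and> adj T u w)"

lemma centre_in_vertices: "c \<in> fst T"
  using centre by (simp add: spider_centre_def)

lemma parent_adj: "w \<in> tips \<Longrightarrow> adj T c (parent w) \<and> adj T (parent w) w"
  unfolding tips_def parent_def by (rule someI_ex) blast

lemma parent_in_centre_nbrs: "w \<in> tips \<Longrightarrow> parent w \<in> centre_nbrs"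
  using parent_adj by (simp add: centre_nbrs_def)

lemma tip_adj_iff: "w \<in> tips \<Longrightarrow> adj T w x \<longleftrightarrow> x = parent w"
  using centre parent_adj[of w] adj_sym[of T]
  unfolding spider_centre_def tips_def by blast

lemma inj_on_parent: "inj_on parent tips"
proof (rule inj_onI)
  fix w w' assume w: "w \<in> tips" "w' \<in> tips" "parent w = parent w'"
  then have "adj T c (parent w)" "adj T (parent w) w" "adj T (parent w) w'" "w \<noteq> c" "w' \<noteq> c"
    using parent_adj[of w] parent_adj[of w'] by (auto simp: tips_def)
  then show "w = w'"
    using centre unfolding spider_centre_def by blast
qed

lemma centre_notin: "c \<notin> centre_nbrs" "c \<notin> tips"
  using adj_vertices by (auto simp: centre_nbrs_def tips_def)

lemma centre_nbrs_tips_disjoint: "centre_nbrs \<inter> tips = {}"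
  using no_triangle adj_sym[of T] by (fastforce simp: centre_nbrs_def tips_def)

lemma vertices_eq: "fst T = insert c (centre_nbrs \<union> tips)"
proof
  show "insert c (centre_nbrs \<union> tips) \<subseteq> fst T"
    using centre_in_vertices adj_vertices by (auto simp: centre_nbrs_def tips_def)
next
  show "fst T \<subseteq> insert c (centre_nbrs \<union> tips)"
  proof
    fix y assume "y \<in> fst T"
    then have "(c, y) \<in> {(u, v). adj T u v}\<^sup>*"
      using is_tree centre_in_vertices unfolding is_tree_def connected_graph_def by blast
    then show "y \<in> insert c (centre_nbrs \<union> tips)"
    proof (induction rule: rtrancl_induct)
      case (step a b)
      then show ?case
        using tip_adj_iff[of a b] parent_in_centre_nbrs[of a]
        by (auto simp: centre_nbrs_def tips_def)
    qed simp
  qed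
qed

lemma adj_iff:
  "adj T x y \<longleftrightarrow> (x = c \<and> y \<in> centre_nbrs) \<or> (y = c \<and> x \<in> centre_nbrs) \<or>
     (x \<in> tips \<and> y = parent x) \<or> (y \<in> tips \<and> x = parent y)"
    (is "_ \<longleftrightarrow> ?rhs x y")
proof
  assume xy: "adj T x y"
  then have yx: "adj T y x"
    by (simp add: adj_sym)
  have "x = c \<or> y = c \<or> x \<in> tips \<or> y \<in> tips \<or> x \<in> centre_nbrs \<and> y \<in> centre_nbrs"
    using xy vertices_eq adj_vertices by blast
  then show "?rhs x y"
  proof (elim disjE conjE)
    assume "x \<in> centre_nbrs" "y \<in> centre_nbrs"
    then have "adj T c x" "adj T y c"
      by (simp_all add: centre_nbrs_def adj_sym[of T y])
    then show ?thesis
      using no_triangle xy by blast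
  qed (use xy yx tip_adj_iff in \<open>auto simp: centre_nbrs_def\<close>)
next
  show "?rhs x y \<Longrightarrow> adj T x y"
    by (elim disjE conjE) (simp_all add: centre_nbrs_def tip_adj_iff, (metis adj_sym tip_adj_iff)+)
qed

lemma chordal_complement_square: "chordal (graph_complement (graph_square T))"
proof (rule split_graph_chordal)
  show "fst (graph_complement (graph_square T)) \<subseteq> tips \<union> insert c centre_nbrs"
    using vertices_eq by auto
  show "far w w'" if "w \<in> tips" "w' \<in> tips" "w \<noteq> w'" for w w'
  proof -
    have "\<not> adj T w w'"
      using that tip_adj_iff parent_in_centre_nbrs centre_nbrs_tips_disjoint by auto
    moreover have "\<not> (adj T w z \<and> adj T z w')" for z
    proof
      assume "adj T w z \<and> adj T z w'"
      then have "parent w = parent w'"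
        using that tip_adj_iff by (metis adj_sym)
      then show False
        using that inj_on_parent by (meson inj_onD)
    qed
    moreover have "w \<in> fst T" "w' \<in> fst T"
      using that vertices_eq by auto
    ultimately show ?thesis
      using that by (simp add: far_iff)
  qed
  show "\<not> far x y" if "x \<in> insert c centre_nbrs" "y \<in> insert c centre_nbrs" for x y
    using that by (auto simp: far_iff centre_nbrs_def adj_sym[of T _ c])
qed

context
  fixes g :: "'a \<Rightarrow> nat"
  assumes g: "bij_betw g centre_nbrs {1..card centre_nbrs}"
    and g_tips: "g ` parent ` tips = {1..card tips}"
begin

definition label :: "'a \<Rightarrow> nat \<times> nat" where
  "label x = (if x = c then (0, 0) else if x \<in> centre_nbrs then (g x, 0) else (g (parent x), 1))"

lemma label_centre: "label c = (0, 0)"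
  by (simp add: label_def)

lemma label_centre_nbr:
  assumes "x \<in> centre_nbrs"
  shows "label x = (g x, 0)" "0 < g x" "g x \<le> card centre_nbrs"
  using assms centre_notin bij_betw_apply[OF g, of x] by (auto simp: label_def)

lemma label_tip:
  assumes "w \<in> tips"
  shows "label w = (g (parent w), 1)" "0 < g (parent w)" "g (parent w) \<le> card tips"
proof -
  have "g (parent w) \<in> {1..card tips}"
    using assms g_tips by blast
  then show "label w = (g (parent w), 1)" "0 < g (parent w)" "g (parent w) \<le> card tips"
    using assms centre_notin centre_nbrs_tips_disjoint by (auto simp: label_def)
qed

lemma bij_betw_label: "bij_betw label (fst T) (fst (whiskered_star (card centre_nbrs) (card tips)))"
proof -
  let ?n = "card centre_nbrs" and ?m = "card tips"
  have "bij_betw label centre_nbrs ((\<lambda>i. (i, 0)) ` {1..?n})"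
  proof -
    have "bij_betw ((\<lambda>i. (i, 0::nat)) \<circ> g) centre_nbrs ((\<lambda>i. (i, 0)) ` {1..?n})"
      by (rule bij_betw_trans[OF g]) (simp add: inj_on_imp_bij_betw inj_on_def)
    then show ?thesis
      by (rule bij_betw_cong[THEN iffD2, rotated]) (simp add: label_centre_nbr)
  qed
  moreover have "bij_betw label tips ((\<lambda>i. (i, 1)) ` {1..?m})"
  proof -
    have "bij_betw g (parent ` tips) {1..?m}"
      using g _ g_tips by (rule bij_betw_subset) (use parent_in_centre_nbrs in blast)
    then have "bij_betw (g \<circ> parent) tips {1..?m}"
      using inj_on_parent by (intro bij_betw_trans) (auto simp: inj_on_imp_bij_betw)
    then have "bij_betw ((\<lambda>i. (i, 1::nat)) \<circ> (g \<circ> parent)) tips ((\<lambda>i. (i, 1)) ` {1..?m})"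
      by (rule bij_betw_trans) (simp add: inj_on_imp_bij_betw inj_on_def)
    then show ?thesis
      by (rule bij_betw_cong[THEN iffD2, rotated]) (simp add: label_tip)
  qed
  ultimately have "bij_betw label ({c} \<union> centre_nbrs \<union> tips)
      ({(0, 0)} \<union> (\<lambda>i. (i, 0)) ` {1..?n} \<union> (\<lambda>i. (i, 1)) ` {1..?m})"
    using centre_notin centre_nbrs_tips_disjoint by (intro bij_betw_combine) (auto simp: label_centre)
  moreover have "{c} \<union> centre_nbrs \<union> tips = fst T"
    using vertices_eq by auto
  moreover have "{(0, 0)} \<union> (\<lambda>i. (i, 0)) ` {1..?n} \<union> (\<lambda>i. (i, 1)) ` {1..?m} =
      fst (whiskered_star ?n ?m)"
    by (auto simp: fst_whiskered_star)
  ultimately show ?thesis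
    by simp
qed

lemma label_eq_centre_iff: "x \<in> fst T \<Longrightarrow> label x = (0, 0) \<longleftrightarrow> x = c"
  using vertices_eq label_centre label_centre_nbr label_tip by fastforce

lemma label_centre_nbr_iff:
  "x \<in> fst T \<Longrightarrow> (\<exists>i. label x = (i, 0) \<and> 1 \<le> i \<and> i \<le> card centre_nbrs) \<longleftrightarrow> x \<in> centre_nbrs"
  using vertices_eq label_centre label_centre_nbr label_tip centre_notin by (auto simp: Suc_le_eq)

lemma label_tip_iff:
  assumes "x \<in> fst T" "y \<in> fst T"
  shows "(\<exists>i. 1 \<le> i \<and> i \<le> card tips \<and> label x = (i, 0) \<and> label y = (i, 1)) \<longleftrightarrow>
    y \<in> tips \<and> x = parent y"
proof
  assume "\<exists>i. 1 \<le> i \<and> i \<le> card tips \<and> label x = (i, 0) \<and> label y = (i, 1)"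
  then have "x \<in> centre_nbrs" "y \<in> tips" "g x = g (parent y)"
    using assms vertices_eq label_centre label_centre_nbr label_tip by auto
  moreover have "inj_on g centre_nbrs"
    using g by (simp add: bij_betw_def)
  ultimately show "y \<in> tips \<and> x = parent y"
    using parent_in_centre_nbrs by (auto dest: inj_onD)
next
  assume "y \<in> tips \<and> x = parent y"
  then show "\<exists>i. 1 \<le> i \<and> i \<le> card tips \<and> label x = (i, 0) \<and> label y = (i, 1)"
    using label_centre_nbr label_tip parent_in_centre_nbrs by (auto simp: Suc_le_eq)
qed

lemma adj_whiskered_star_label_iff:
  assumes "x \<in> fst T" "y \<in> fst T"
  shows "adj (whiskered_star (card centre_nbrs) (card tips)) (label x) (label y) \<longleftrightarrow> adj T x y"
proof -
  let ?n = "card centre_nbrs" and ?m = "card tips"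
  have "adj (whiskered_star ?n ?m) (label x) (label y) \<longleftrightarrow>
      (label x = (0, 0) \<and> (\<exists>i. label y = (i, 0) \<and> 1 \<le> i \<and> i \<le> ?n)) \<or>
      (label y = (0, 0) \<and> (\<exists>i. label x = (i, 0) \<and> 1 \<le> i \<and> i \<le> ?n)) \<or>
      (\<exists>i. 1 \<le> i \<and> i \<le> ?m \<and> label x = (i, 0) \<and> label y = (i, 1)) \<or>
      (\<exists>i. 1 \<le> i \<and> i \<le> ?m \<and> label y = (i, 0) \<and> label x = (i, 1))"
    unfolding adj_whiskered_star by blast
  also have "\<dots> \<longleftrightarrow> (x = c \<and> y \<in> centre_nbrs) \<or> (y = c \<and> x \<in> centre_nbrs) \<or>
      (y \<in> tips \<and> x = parent y) \<or> (x \<in> tips \<and> y = parent x)"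
    by (simp only: label_eq_centre_iff label_centre_nbr_iff label_tip_iff assms)
  also have "\<dots> \<longleftrightarrow> adj T x y"
    unfolding adj_iff by blast
  finally show ?thesis .
qed

end

lemma graph_iso_whiskered_star: "graph_iso T (whiskered_star (card centre_nbrs) (card tips))"
proof -
  have "finite centre_nbrs" "parent ` tips \<subseteq> centre_nbrs"
    using vertices_eq finite_vertices parent_in_centre_nbrs finite_subset by auto
  moreover have "card (parent ` tips) = card tips"
    using inj_on_parent by (rule card_image)
  ultimately obtain g where "bij_betw g centre_nbrs {1..card centre_nbrs}"
    and "g ` parent ` tips = {1..card tips}"
    using ex_bij_betw_interval_prefix by metis
  then show ?thesis
    unfolding graph_iso_def using bij_betw_label adj_whiskered_star_label_iff by blast
qed

lemma graph_iso_star_or_whiskered_star: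
  assumes "card (fst T) \<ge> 2"
  shows "(\<exists>t. 1 \<le> t \<and> graph_iso T (star_graph t)) \<or>
    (\<exists>n m. 1 \<le> n \<and> 1 \<le> m \<and> m \<le> n \<and> graph_iso T (whiskered_star n m))"
proof -
  have "card tips = card (parent ` tips)"
    using inj_on_parent by (simp add: card_image)
  also have "\<dots> \<le> card centre_nbrs"
    using parent_in_centre_nbrs vertices_eq finite_vertices by (intro card_mono) auto
  finally have "card tips \<le> card centre_nbrs" .
  moreover have "centre_nbrs \<noteq> {}"
  proof
    assume "centre_nbrs = {}"
    then have "fst T = {c}"
      using vertices_eq parent_in_centre_nbrs by auto
    then show False
      using assms by simp
  qed
  then have "1 \<le> card centre_nbrs"
    using vertices_eq finite_vertices by (simp add: Suc_le_eq card_gt_0_iff)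
  ultimately show ?thesis
    using graph_iso_whiskered_star graph_iso_trans[OF _ graph_iso_whiskered_star_0]
    by (metis less_one not_le)
qed

end

lemma (in tree) chordal_iff_ex_spider_centre:
  "chordal (graph_complement (graph_square T)) \<longleftrightarrow> (\<exists>c. spider_centre T c)"
proof
  assume "\<exists>c. spider_centre T c"
  then obtain c where "spider_centre T c" ..
  then interpret spider T c
    by unfold_locales
  show "chordal (graph_complement (graph_square T))"
    by (rule chordal_complement_square)
qed (rule chordal_imp_ex_spider_centre)

theorem corollary3p12:
  fixes T :: "'a graph"
  assumes "is_tree T" and "card (fst T) \<ge> 2"
  shows "chordal (graph_complement (graph_square T)) \<longleftrightarrow>
     (\<exists>n. 2 \<le> n \<and> n \<le> 5 \<and> graph_iso T (path_graph n)) \<or>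
     (\<exists>t. 1 \<le> t \<and> graph_iso T (star_graph t)) \<or>
     (\<exists>n m. 1 \<le> n \<and> 1 \<le> m \<and> m \<le> n \<and> graph_iso T (whiskered_star n m))"
    (is "_ \<longleftrightarrow> ?classified")
proof -
  interpret tree T
    using assms(1) by unfold_locales
  have "chordal (graph_complement (graph_square T)) \<longleftrightarrow> (\<exists>c. spider_centre T c)"
    by (rule chordal_iff_ex_spider_centre)
  also have "\<dots> \<longleftrightarrow> ?classified"
  proof
    assume "\<exists>c. spider_centre T c"
    then obtain c where "spider_centre T c" ..
    then interpret spider T c
      by unfold_locales
    show ?classified
      using graph_iso_star_or_whiskered_star[OF assms(2)] by blast
  next
    assume ?classified
    then show "\<exists>c. spider_centre T c"
      using spider_centre_graph_iso[OF simple_graph _ spider_centre_path_graph]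
        spider_centre_graph_iso[OF simple_graph _ spider_centre_star_graph]
        spider_centre_graph_iso[OF simple_graph _ spider_centre_whiskered_star]
      by fastforce
  qed
  finally show ?thesis .
qed

end
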